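(* Let $n\ge 1$ and let $f_1,\dots,f_n\in\mathcal{B}_c$. Let $X=(X_1,\dots,X_n)$ be a random vector in $\mathbb{R}^n$ (the $X_i$ possibly dependent) such that $P(|X_i|\ge u)\le f_i(u)$ for all $u\ge 0$ and all $i$. Let $g:\mathbb{R}^n\to\mathbb{R}$ be continuous and $t\in\mathbb{R}$. Suppose there exists $s_t\in(0,1]$ such that $$L(s_t)\in \partial_{SW}\, Q\big(g^{-1}[t,\infty)\big).$$ Then $P(g(X)\ge t)\le n\,s_t$.
   Context: $\mathcal{B}_c$ is the set of functions $f:[0,\infty)\to(0,\infty)$ that are continuous, strictly decreasing, satisfy $f(0)\ge 1$ and $\lim_{u\to\infty}f(u)=0$. For such $f_i$, $L(s)=(f_1^{-1}(s),\dots,f_n^{-1}(s))\in[0,\infty)^n$ for $s\in(0,1]$. $Q:\mathbb{R}^n\to[0,\infty)^n$ is $Q(x_1,\dots,x_n)=(|x_1|,\dots,|x_n|)$. For $x,y\in[0,\infty)^n$, write $x\le' y$ iff $x_i\le y_i$ for all $i$, and $x<'y$ iff $x\le' y$ and $x\ne y$. For a nonempty closed $V\subset[0,\infty)^n$, the southwest boundary is $\partial_{SW}V=\{x\in V:\ \text{there is no } x'\in V \text{ with } x'<'x\}$, i.e. the set of minimal elements of $V$. *)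

theory Defs
  imports "HOL-Probability.Probability"
begin

text \<open>The class B_c: functions on [0,\<infinity>) (represented as real functions, only their
  values on {0..} matter) that are continuous, strictly decreasing, positive,
  with f 0 \<ge> 1 and limit 0 at infinity.\<close>
definition Bc :: "(real \<Rightarrow> real) \<Rightarrow> bool" where
  "Bc f \<longleftrightarrow> continuous_on {0..} f \<and> strict_antimono_on {0..} f \<and>
     (\<forall>u\<ge>0. f u > 0) \<and> f 0 \<ge> 1 \<and> (f \<longlongrightarrow> 0) at_top"

definition finv :: "(real \<Rightarrow> real) \<Rightarrow> real \<Rightarrow> real" where
  "finv f s = (THE u. u \<ge> 0 \<and> f u = s)"

definition Lvec :: "('n::finite \<Rightarrow> real \<Rightarrow> real) \<Rightarrow> real \<Rightarrow> real ^ 'n" where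
  "Lvec f s = (\<chi> i. finv (f i) s)"

definition Qmap :: "real ^ 'n::finite \<Rightarrow> real ^ 'n" where
  "Qmap x = (\<chi> i. \<bar>x $ i\<bar>)"

definition cw_le :: "real ^ 'n::finite \<Rightarrow> real ^ 'n \<Rightarrow> bool" where
  "cw_le x y \<longleftrightarrow> (\<forall>i. x $ i \<le> y $ i)"

definition cw_less :: "real ^ 'n::finite \<Rightarrow> real ^ 'n \<Rightarrow> bool" where
  "cw_less x y \<longleftrightarrow> cw_le x y \<and> x \<noteq> y"

definition sw_boundary :: "(real ^ 'n::finite) set \<Rightarrow> (real ^ 'n) set" where
  "sw_boundary V = {x \<in> V. \<not> (\<exists>x'\<in>V. cw_less x' x)}"

end

theory Submission
  imports Defs
begin

(* If g (X w) >= t, then Q (X w) lies in Q (g^-1 [t,oo)), so it cannot lie strictly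
   below the minimal point L(s) in every coordinate: |X_i w| >= L_i(s) for some i.
   Hence the event g (X) >= t is covered by the n events |X_i| >= L_i(s), each of
   probability at most f_i (L_i(s)) = s, and the union bound gives n s. *)

lemma Bc_finv:
  assumes "Bc f" and "0 < s" and "s \<le> 1"
  shows finv_nonneg: "finv f s \<ge> 0" and f_finv: "f (finv f s) = s"
proof -
  have cont: "continuous_on {0..} f" and anti: "strict_antimono_on {0..} f"
    and f0: "f 0 \<ge> 1" and lim: "(f \<longlongrightarrow> 0) at_top"
    using assms(1) unfolding Bc_def by auto
  obtain b0 where b0: "\<And>u. u \<ge> b0 \<Longrightarrow> f u < s"
    using order_tendstoD(2)[OF lim \<open>0 < s\<close>] by (auto simp: eventually_at_top_linorder)
  define b where "b = max b0 0"
  have "continuous_on {0..b} f"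
    using cont by (rule continuous_on_subset) auto
  moreover have "f b \<le> s" "s \<le> f 0" "0 \<le> b"
    using b0[of b] f0 \<open>s \<le> 1\<close> by (auto simp: b_def)
  ultimately obtain u where u: "0 \<le> u" "f u = s"
    using IVT2'[of f b s 0] by auto
  have uniq: "v = u" if "v \<ge> 0" "f v = s" for v
  proof (rule ccontr)
    assume "v \<noteq> u"
    then consider "v < u" | "u < v"
      by linarith
    then show False
      using monotone_onD[OF anti, of v u] monotone_onD[OF anti, of u v] that u
      by cases simp_all
  qed
  have "finv f s = u"
    unfolding finv_def using u uniq by (intro the_equality) blast+
  then show "finv f s \<ge> 0" "f (finv f s) = s"
    using u by auto
qed

lemma cw_less_if_less_componentwise:
  assumes "\<And>i. x $ i < y $ i"
  shows "cw_less x y"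
proof -
  have "x $ undefined \<noteq> y $ undefined"
    using assms[of undefined] by simp
  then show ?thesis
    using assms by (auto simp: cw_less_def cw_le_def less_imp_le)
qed

lemma sw_boundary_component_le:
  assumes "y \<in> sw_boundary V" and "x \<in> V"
  shows "\<exists>i. y $ i \<le> x $ i"
proof (rule ccontr)
  assume "\<nexists>i. y $ i \<le> x $ i"
  then have "cw_less x y"
    by (intro cw_less_if_less_componentwise) (simp add: not_le)
  with assms show False
    unfolding sw_boundary_def by blast
qed

lemma (in finite_measure) measure_le_card_mult_if_covered:
  assumes "finite I" and "A \<subseteq> (\<Union>i\<in>I. B i)"
    and "\<And>i. i \<in> I \<Longrightarrow> B i \<in> sets M" and "\<And>i. i \<in> I \<Longrightarrow> measure M (B i) \<le> s"
  shows "measure M A \<le> real (card I) * s"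
proof -
  have "measure M A \<le> measure M (\<Union>i\<in>I. B i)"
    using assms by (intro finite_measure_mono) auto
  also have "\<dots> \<le> (\<Sum>i\<in>I. measure M (B i))"
    using assms by (intro finite_measure_subadditive_finite) auto
  also have "\<dots> \<le> (\<Sum>i\<in>I. s)"
    using assms by (intro sum_mono) auto
  finally show ?thesis by simp
qed

lemma measurable_abs_component_ge:
  fixes X :: "'a \<Rightarrow> real ^ 'n::finite"
  assumes "X \<in> borel_measurable M"
  shows "{\<omega> \<in> space M. u \<le> \<bar>X \<omega> $ i\<bar>} \<in> sets M"
proof -
  have "(\<lambda>x::real ^ 'n. x $ i) \<in> borel_measurable borel"
    by (intro borel_measurable_continuous_onI continuous_on_component continuous_on_id)
  then have "(\<lambda>\<omega>. X \<omega> $ i) \<in> borel_measurable M"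
    using assms by (rule measurable_compose[rotated])
  then show ?thesis
    by measurable
qed

theorem theorem1:
  fixes M :: "'a measure" and X :: "'a \<Rightarrow> real ^ 'n::finite"
    and f :: "'n \<Rightarrow> real \<Rightarrow> real" and g :: "real ^ 'n \<Rightarrow> real"
    and t s :: real
  assumes "prob_space M"
    and "X \<in> borel_measurable M"
    and "\<And>i. Bc (f i)"
    and "\<And>i u. u \<ge> 0 \<Longrightarrow> measure M {\<omega> \<in> space M. \<bar>X \<omega> $ i\<bar> \<ge> u} \<le> f i u"
    and "continuous_on UNIV g"
    and "0 < s" and "s \<le> 1"
    and "Lvec f s \<in> sw_boundary (Qmap ` (g -` {t..}))"
  shows "measure M {\<omega> \<in> space M. g (X \<omega>) \<ge> t} \<le> real CARD('n) * s"
proof -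
  interpret prob_space M by fact
  define B where "B i = {\<omega> \<in> space M. \<bar>X \<omega> $ i\<bar> \<ge> finv (f i) s}" for i
  have "{\<omega> \<in> space M. g (X \<omega>) \<ge> t} \<subseteq> (\<Union>i\<in>UNIV. B i)"
  proof
    fix \<omega> assume \<omega>: "\<omega> \<in> {\<omega> \<in> space M. g (X \<omega>) \<ge> t}"
    then have "Qmap (X \<omega>) \<in> Qmap ` (g -` {t..})"
      by auto
    then obtain i where "Lvec f s $ i \<le> Qmap (X \<omega>) $ i"
      using sw_boundary_component_le[OF assms(8)] by blast
    then show "\<omega> \<in> (\<Union>i\<in>UNIV. B i)"
      using \<omega> by (auto simp: B_def Lvec_def Qmap_def)
  qed
  moreover have "B i \<in> sets M" for i
    unfolding B_def by (rule measurable_abs_component_ge[OF assms(2)])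
  moreover have "measure M (B i) \<le> s" for i
  proof -
    have "measure M (B i) \<le> f i (finv (f i) s)"
      unfolding B_def by (rule assms(4)[OF finv_nonneg[OF assms(3,6,7)]])
    then show ?thesis
      using f_finv[OF assms(3,6,7)] by simp
  qed
  ultimately show ?thesis
    using measure_le_card_mult_if_covered[of UNIV _ B s] by simp
qed

end
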